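(* Let $A$ be an abelian group of order $2n$ and let $G=Dic_{4n}(A)$ be the generalized dicyclic group induced by $A$. Then: \begin{enumerate} \item If $A$ is not isomorphic to $\mathbb{Z}_2^m\times\mathbb{Z}_4$ for any $m\in\mathbb{N}$, then $\mathcal{CD}(G)$ is a chain of length $0$; namely $\mathcal{CD}(G)=\{G\}$ if $\exp(A)=2$, and $\mathcal{CD}(G)=\{A\}$ if $\exp(A)\neq 2$. \item If $A\cong\mathbb{Z}_2^m\times\mathbb{Z}_4$ for some $m\in\mathbb{N}$, then $\mathcal{CD}(G)$ is a quasi-antichain of width $3$, namely the set of all subgroups $H$ with $Z(G)\le H\le G$. \end{enumerate}
   Context: Here $\mathbb{N}=\{0,1,2,\dots\}$. For an abelian group $A$ of order $2n$, the generalized dicyclic group induced by $A$ is $Dic_{4n}(A)=\langle A,x\mid x^4=1,\ x^2\in A\setminus\{1\},\ x^{-1}ax=a^{-1}\ \forall a\in A\rangle$ (a group of order $4n$ containing $A$ as a subgroup of index $2$). For a finite group $G$ and $H\le G$, $m_G(H)=|H|\,|C_G(H)|$, $m^*(G)=\max\{m_G(H)\mid H\le G\}$, and the Chermak-Delgado lattice is $\mathcal{CD}(G)=\{H\le G\mid m_G(H)=m^*(G)\}$. A chain of length $0$ is a one-element lattice. A lattice is a quasi-antichain of width $w$ if it consists of a least element, a greatest element, and $w$ further pairwise incomparable elements. *)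

theory Defs
  imports "HOL-Algebra.Algebra"
begin

definition centralizer :: "('a, 'b) monoid_scheme \<Rightarrow> 'a set \<Rightarrow> 'a set" where
  "centralizer G H = {g \<in> carrier G. \<forall>h\<in>H. g \<otimes>\<^bsub>G\<^esub> h = h \<otimes>\<^bsub>G\<^esub> g}"

definition group_center :: "('a, 'b) monoid_scheme \<Rightarrow> 'a set" where
  "group_center G = centralizer G (carrier G)"

definition cd_measure :: "('a, 'b) monoid_scheme \<Rightarrow> 'a set \<Rightarrow> nat" where
  "cd_measure G H = card H * card (centralizer G H)"

definition cd_max :: "('a, 'b) monoid_scheme \<Rightarrow> nat" where
  "cd_max G = Max {cd_measure G H | H. subgroup H G}"

definition CD_lattice :: "('a, 'b) monoid_scheme \<Rightarrow> 'a set set" where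
  "CD_lattice G = {H. subgroup H G \<and> cd_measure G H = cd_max G}"

definition gen_dicyclic :: "('a, 'b) monoid_scheme \<Rightarrow> 'a set \<Rightarrow> bool" where
  "gen_dicyclic G A \<longleftrightarrow> group G \<and> finite (carrier G) \<and> subgroup A G \<and>
     (\<forall>a\<in>A. \<forall>b\<in>A. a \<otimes>\<^bsub>G\<^esub> b = b \<otimes>\<^bsub>G\<^esub> a) \<and>
     (\<exists>x\<in>carrier G. x \<notin> A \<and> carrier G = A \<union> {x \<otimes>\<^bsub>G\<^esub> a | a. a \<in> A} \<and>
        x [^]\<^bsub>G\<^esub> (4::nat) = \<one>\<^bsub>G\<^esub> \<and>
        x [^]\<^bsub>G\<^esub> (2::nat) \<in> A \<and> x [^]\<^bsub>G\<^esub> (2::nat) \<noteq> \<one>\<^bsub>G\<^esub> \<and>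
        (\<forall>a\<in>A. inv\<^bsub>G\<^esub> x \<otimes>\<^bsub>G\<^esub> a \<otimes>\<^bsub>G\<^esub> x = inv\<^bsub>G\<^esub> a))"

definition Z2m_Z4 :: "nat \<Rightarrow> ((nat \<Rightarrow> int) \<times> int) monoid" where
  "Z2m_Z4 m = product_group {..<m} (\<lambda>_. integer_mod_group 2) \<times>\<times> integer_mod_group 4"

definition exponent_two :: "('a, 'b) monoid_scheme \<Rightarrow> 'a set \<Rightarrow> bool" where
  "exponent_two G A \<longleftrightarrow> A \<noteq> {\<one>\<^bsub>G\<^esub>} \<and> (\<forall>a\<in>A. a [^]\<^bsub>G\<^esub> (2::nat) = \<one>\<^bsub>G\<^esub>)"

definition quasi_antichain :: "'a set set \<Rightarrow> nat \<Rightarrow> bool" where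
  "quasi_antichain L w \<longleftrightarrow> (\<exists>bot top S. L = {bot, top} \<union> S \<and> bot \<noteq> top \<and>
      bot \<notin> S \<and> top \<notin> S \<and> finite S \<and> card S = w \<and>
      (\<forall>H\<in>L. bot \<subseteq> H \<and> H \<subseteq> top) \<and>
      (\<forall>H\<in>S. \<forall>K\<in>S. H \<subseteq> K \<longrightarrow> H = K))"

end

theory Submission
  imports Defs
begin

(* Let \<Omega> be the set of elements of A of order at most 2. Every element g outside A inverts A
   by conjugation and squares to x^2, and g^-1 h lies in A for any two elements g, h outside A.
   Hence \<Omega> is central and an element of A commutes with g iff it lies in \<Omega>; this pins down
   the centralizers well enough to show m(H) \<le> |A|^2 = m(A) whenever \<Omega> \<noteq> A, with equality
   for H \<noteq> A only if |A : \<Omega>| = 2 and \<Omega> \<le> H. In that case \<Omega> = Z(G), and the subgroups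
   above \<Omega> are \<Omega>, A, G and the two abelian subgroups \<Omega> \<union> g\<Omega>, all of measure |A|^2.
   If \<Omega> = A, then G is abelian.
   Finally, a finite abelian group A with |A : \<Omega>| = 2 is Z_2^m x Z_4: an element outside \<Omega>
   has order 4, and an embedding of Z_2^m x Z_4 whose image contains it but is not all of A
   extends to Z_2^(m+1) x Z_4 by an involution outside the image. *)

section \<open>Abelian groups of type Z_2^m x Z_4\<close>

definition Omega1 :: "('a, 'b) monoid_scheme \<Rightarrow> 'a set" where
  "Omega1 G = {a \<in> carrier G. a \<otimes>\<^bsub>G\<^esub> a = \<one>\<^bsub>G\<^esub>}"

lemma (in comm_group) subgroup_Omega1: "subgroup (Omega1 G) G"
proof (rule subgroupI)
  show "Omega1 G \<subseteq> carrier G" "Omega1 G \<noteq> {}"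
    by (auto simp: Omega1_def)
  show "inv a \<in> Omega1 G" if "a \<in> Omega1 G" for a
    using that by (auto simp: Omega1_def simp flip: inv_mult)
  show "a \<otimes> b \<in> Omega1 G" if "a \<in> Omega1 G" "b \<in> Omega1 G" for a b
  proof -
    have "(a \<otimes> b) \<otimes> (a \<otimes> b) = (a \<otimes> a) \<otimes> (b \<otimes> b)"
      using that by (simp add: Omega1_def m_ac)
    then show ?thesis using that by (simp add: Omega1_def)
  qed
qed

lemma Omega1_iso_card:
  assumes h: "h \<in> iso G H" and "group G" "group H"
  shows "card (Omega1 G) = card (Omega1 H)"
proof -
  have hom: "h \<in> hom G H" and bij: "bij_betw h (carrier G) (carrier H)"
    using h by (auto simp: iso_def)
  have sq_one_iff: "h a \<otimes>\<^bsub>H\<^esub> h a = \<one>\<^bsub>H\<^esub> \<longleftrightarrow> a \<otimes>\<^bsub>G\<^esub> a = \<one>\<^bsub>G\<^esub>" if "a \<in> carrier G" for a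
  proof -
    have "a \<otimes>\<^bsub>G\<^esub> a \<in> carrier G" "\<one>\<^bsub>G\<^esub> \<in> carrier G"
      using that group.is_monoid[OF assms(2)] by (simp_all add: monoid.m_closed)
    moreover have "h a \<otimes>\<^bsub>H\<^esub> h a = h (a \<otimes>\<^bsub>G\<^esub> a)" "h \<one>\<^bsub>G\<^esub> = \<one>\<^bsub>H\<^esub>"
      using that hom_mult[OF hom] hom_one[OF hom assms(2,3)] by simp_all
    ultimately show ?thesis
      using bij by (metis bij_betw_def inj_onD)
  qed
  have "h ` Omega1 G = Omega1 H"
    using bij sq_one_iff by (fastforce simp: Omega1_def bij_betw_def)
  moreover have "inj_on h (Omega1 G)"
    using bij by (auto simp: Omega1_def bij_betw_def intro: inj_on_subset)
  ultimately show ?thesis by (metis card_image)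
qed

lemma (in group) subgroup_translate_disjoint:
  assumes "subgroup H G" "a \<in> carrier G" "a \<notin> H"
  shows "H \<inter> (\<lambda>h. a \<otimes> h) ` H = {}" and "card ((\<lambda>h. a \<otimes> h) ` H) = card H"
proof -
  have HG: "H \<subseteq> carrier G" by (rule subgroup.subset[OF assms(1)])
  show "H \<inter> (\<lambda>h. a \<otimes> h) ` H = {}"
  proof (rule ccontr)
    assume "H \<inter> (\<lambda>h. a \<otimes> h) ` H \<noteq> {}"
    then obtain h where h: "h \<in> H" "a \<otimes> h \<in> H" by auto
    then have "(a \<otimes> h) \<otimes> inv h \<in> H"
      by (simp add: assms(1) subgroup.m_closed subgroup.m_inv_closed)
    then show False using h HG assms by (simp add: m_assoc subsetD)
  qed
  show "card ((\<lambda>h. a \<otimes> h) ` H) = card H"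
    using HG assms(2) by (intro card_image inj_onI) (metis l_cancel subsetD)
qed

lemma (in group) double_card_subgroup_le:
  assumes "finite (carrier G)" "subgroup H G" "a \<in> carrier G" "a \<notin> H"
  shows "2 * card H \<le> order G"
proof -
  have sub: "H \<union> (\<lambda>h. a \<otimes> h) ` H \<subseteq> carrier G"
    using subgroup.subset[OF assms(2)] assms(3) by auto
  have "card (H \<union> (\<lambda>h. a \<otimes> h) ` H) = 2 * card H"
    using subgroup_translate_disjoint[OF assms(2-4)] finite_subset[OF sub assms(1)]
    by (simp add: card_Un_disjoint)
  then show ?thesis
    using card_mono[OF assms(1) sub] by (simp add: order_def)
qed

lemma (in group) index_two_subgroup_cover:
  assumes "finite (carrier G)" "subgroup H G" "2 * card H = order G"
    and "a \<in> carrier G" "a \<notin> H"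
  shows "carrier G = H \<union> (\<lambda>h. a \<otimes> h) ` H"
proof -
  have sub: "H \<union> (\<lambda>h. a \<otimes> h) ` H \<subseteq> carrier G"
    using subgroup.subset[OF assms(2)] assms(4) by auto
  have "card (H \<union> (\<lambda>h. a \<otimes> h) ` H) = order G"
    using subgroup_translate_disjoint[OF assms(2,4,5)] finite_subset[OF sub assms(1)] assms(3)
    by (simp add: card_Un_disjoint)
  then show ?thesis
    using card_subset_eq[OF assms(1) sub] by (simp add: order_def)
qed

lemma (in group) index_two_square_mem:
  assumes "finite (carrier G)" "subgroup H G" "2 * card H = order G"
    and a: "a \<in> carrier G" "a \<notin> H"
  shows "a \<otimes> a \<in> H"
proof -
  have "a \<otimes> a \<in> H \<union> (\<lambda>h. a \<otimes> h) ` H"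
    using index_two_subgroup_cover[OF assms] a by blast
  moreover have "a \<otimes> a \<notin> (\<lambda>h. a \<otimes> h) ` H"
    using a subgroup.subset[OF assms(2)] by auto
  ultimately show ?thesis by blast
qed

lemma (in group) int_pow_mod_eq:
  assumes "x \<in> carrier G" "x [^] (n::nat) = \<one>"
  shows "x [^] (i mod int n) = x [^] i"
proof -
  have "int (ord x) dvd int n"
    using assms pow_eq_id by simp
  also have "int n dvd i - i mod int n"
    by (simp add: minus_mod_eq_mult_div)
  finally show ?thesis
    using int_pow_eq[OF assms(1)] by simp
qed

lemma group_Z2m_Z4: "group (Z2m_Z4 m)"
  unfolding Z2m_Z4_def by (intro DirProd_group product_group group_integer_mod_group)

lemma carrier_Z2m_Z4: "carrier (Z2m_Z4 m) = (\<Pi>\<^sub>E i\<in>{..<m}. {0..<2}) \<times> {0..<4}"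
  unfolding Z2m_Z4_def by (simp add: carrier_integer_mod_group)

lemma mult_Z2m_Z4:
  "(f, k) \<otimes>\<^bsub>Z2m_Z4 m\<^esub> (f', k') = ((\<lambda>i\<in>{..<m}. (f i + f' i) mod 2), (k + k') mod 4)"
  unfolding Z2m_Z4_def by simp

lemma one_Z2m_Z4: "\<one>\<^bsub>Z2m_Z4 m\<^esub> = ((\<lambda>i\<in>{..<m}. 0), 0)"
  unfolding Z2m_Z4_def by simp

lemma card_Z2m_Z4: "card (carrier (Z2m_Z4 m)) = 2 ^ m * 4"
  by (simp add: carrier_Z2m_Z4 card_cartesian_product card_PiE)

lemma Omega1_Z2m_Z4: "Omega1 (Z2m_Z4 m) = (\<Pi>\<^sub>E i\<in>{..<m}. {0..<2}) \<times> {0, 2}"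
proof -
  have "(\<lambda>i\<in>{..<m}. (f i + f i) mod 2) = (\<lambda>i\<in>{..<m}. 0 :: int)" for f :: "nat \<Rightarrow> int"
    by (rule restrict_ext) presburger
  moreover have "(k + k) mod 4 = 0 \<longleftrightarrow> k \<in> {0, 2}" if "k \<in> {0..<4::int}" for k
    using that by auto
  ultimately show ?thesis
    by (auto simp: Omega1_def carrier_Z2m_Z4 mult_Z2m_Z4 one_Z2m_Z4)
qed

lemma double_card_Omega1_Z2m_Z4: "2 * card (Omega1 (Z2m_Z4 m)) = card (carrier (Z2m_Z4 m))"
  by (simp add: Omega1_Z2m_Z4 carrier_Z2m_Z4 card_cartesian_product)

lemma carrier_Z2m_Z4_Suc:
  "(f, k) \<in> carrier (Z2m_Z4 (Suc m)) \<longleftrightarrow>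
     (restrict f {..<m}, k) \<in> carrier (Z2m_Z4 m) \<and> f m \<in> {0, 1} \<and> f \<in> extensional {..<Suc m}"
  by (auto simp: carrier_Z2m_Z4 PiE_iff lessThan_Suc)

lemma (in group) embedding_Z2m_Z4_0:
  assumes a: "a \<in> carrier G" "a [^] (4::nat) = \<one>" "a \<otimes> a \<noteq> \<one>"
  defines "\<psi> \<equiv> \<lambda>p. a [^] snd p"
  shows "\<psi> \<in> hom (Z2m_Z4 0) G \<and> inj_on \<psi> (carrier (Z2m_Z4 0)) \<and> a \<in> \<psi> ` carrier (Z2m_Z4 0)"
proof (intro conjI)
  have carrier0: "carrier (Z2m_Z4 0) = {\<lambda>_. undefined} \<times> {0..<4}"
    by (simp add: carrier_Z2m_Z4)
  have "a [^] (i mod 4) = a [^] i" for i :: int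
    using int_pow_mod_eq[OF a(1,2), of i] by simp
  then show hom: "\<psi> \<in> hom (Z2m_Z4 0) G"
    using a by (intro homI) (auto simp: \<psi>_def carrier0 mult_Z2m_Z4 int_pow_mult)
  have "ord a dvd 4" "\<not> ord a dvd 2"
    using a pow_eq_id[of a 2] by (simp_all add: pow_eq_id numeral_2_eq_2)
  moreover have "ord a \<in> {..4}"
    using \<open>ord a dvd 4\<close> by (simp add: dvd_imp_le)
  moreover have "{..4::nat} = {0, 1, 2, 3, 4}" by auto
  ultimately have "ord a = 4" by auto
  then have "k = 0" if "k \<in> {0..<4}" "a [^] k = \<one>" for k :: int
    using that int_pow_eq_id[OF a(1), of k] by auto
  then show "inj_on \<psi> (carrier (Z2m_Z4 0))"
    unfolding inj_on_one_iff'[OF hom group_Z2m_Z4 is_group] by (auto simp: \<psi>_def carrier0 one_Z2m_Z4)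
  have "\<psi> (\<lambda>_. undefined, 1) = a"
    using a by (simp add: \<psi>_def)
  then show "a \<in> \<psi> ` carrier (Z2m_Z4 0)"
    by (force simp: carrier0)
qed

lemma (in comm_group) embedding_Z2m_Z4_Suc:
  assumes hom: "\<psi> \<in> hom (Z2m_Z4 m) G" and inj: "inj_on \<psi> (carrier (Z2m_Z4 m))"
    and e: "e \<in> carrier G" "e \<otimes> e = \<one>" "e \<notin> \<psi> ` carrier (Z2m_Z4 m)"
  defines "\<psi>' \<equiv> \<lambda>(f, k). \<psi> (restrict f {..<m}, k) \<otimes> e [^] f m"
  shows "\<psi>' \<in> hom (Z2m_Z4 (Suc m)) G \<and> inj_on \<psi>' (carrier (Z2m_Z4 (Suc m))) \<and>
         \<psi> ` carrier (Z2m_Z4 m) \<subseteq> \<psi>' ` carrier (Z2m_Z4 (Suc m))"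
proof (intro conjI)
  interpret Z: group "Z2m_Z4 m" by (rule group_Z2m_Z4)
  have ghom: "group_hom (Z2m_Z4 m) G \<psi>"
    using hom by (simp add: group_hom_def group_hom_axioms_def group_Z2m_Z4)
  have \<psi>_carrier: "\<psi> q \<in> carrier G" if "q \<in> carrier (Z2m_Z4 m)" for q
    using hom that by (rule hom_in_carrier)
  have e_pow_mult: "e [^] ((i + j) mod 2) = e [^] i \<otimes> e [^] j" for i j :: int
    using e int_pow_mod_eq[of e 2 "i + j"] by (simp add: numeral_2_eq_2 int_pow_mult)
  show hom': "\<psi>' \<in> hom (Z2m_Z4 (Suc m)) G"
  proof (rule homI)
    fix p p' assume p: "p \<in> carrier (Z2m_Z4 (Suc m))" and p': "p' \<in> carrier (Z2m_Z4 (Suc m))"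
    obtain f k f' k' where fk: "p = (f, k)" "p' = (f', k')" by (cases p, cases p')
    let ?q = "(restrict f {..<m}, k)" and ?q' = "(restrict f' {..<m}, k')"
    have q: "?q \<in> carrier (Z2m_Z4 m)" "?q' \<in> carrier (Z2m_Z4 m)"
      using p p' fk carrier_Z2m_Z4_Suc by auto
    then show "\<psi>' p \<in> carrier G"
      using fk e by (simp add: \<psi>'_def \<psi>_carrier)
    have "p \<otimes>\<^bsub>Z2m_Z4 (Suc m)\<^esub> p' = ((\<lambda>i\<in>{..<Suc m}. (f i + f' i) mod 2), (k + k') mod 4)"
      using fk by (simp add: mult_Z2m_Z4)
    moreover have "(restrict (\<lambda>i\<in>{..<Suc m}. (f i + f' i) mod 2) {..<m}, (k + k') mod 4) =
        ?q \<otimes>\<^bsub>Z2m_Z4 m\<^esub> ?q'"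
      by (auto simp: mult_Z2m_Z4)
    ultimately have "\<psi>' (p \<otimes>\<^bsub>Z2m_Z4 (Suc m)\<^esub> p') = \<psi> (?q \<otimes>\<^bsub>Z2m_Z4 m\<^esub> ?q') \<otimes> e [^] ((f m + f' m) mod 2)"
      unfolding \<psi>'_def by (simp only: case_prod_conv restrict_apply' lessThan_iff lessI)
    also have "\<dots> = (\<psi> ?q \<otimes> e [^] f m) \<otimes> (\<psi> ?q' \<otimes> e [^] f' m)"
      using q e by (simp add: hom_mult[OF hom] e_pow_mult \<psi>_carrier m_ac)
    finally show "\<psi>' (p \<otimes>\<^bsub>Z2m_Z4 (Suc m)\<^esub> p') = \<psi>' p \<otimes> \<psi>' p'"
      using fk by (simp add: \<psi>'_def)
  qed
  have "p = \<one>\<^bsub>Z2m_Z4 (Suc m)\<^esub>" if p: "p \<in> carrier (Z2m_Z4 (Suc m))" "\<psi>' p = \<one>" for p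
  proof -
    obtain f k where fk: "p = (f, k)" by (cases p)
    let ?q = "(restrict f {..<m}, k)"
    have q: "?q \<in> carrier (Z2m_Z4 m)" and fm: "f m \<in> {0, 1}" and f_ext: "f \<in> extensional {..<Suc m}"
      using p fk carrier_Z2m_Z4_Suc by auto
    have "f m \<noteq> 1"
    proof
      assume "f m = 1"
      then have "e \<otimes> \<psi> ?q = \<one>"
        using p fk q e by (simp add: \<psi>'_def \<psi>_carrier m_comm)
      then have "e = inv (\<psi> ?q)"
        using q e by (simp add: \<psi>_carrier inv_equality)
      also have "\<dots> = \<psi> (inv\<^bsub>Z2m_Z4 m\<^esub> ?q)"
        using group_hom.hom_inv[OF ghom q] by simp
      finally show False
        using e(3) q Z.inv_closed by blast
    qed
    with fm have "f m = 0" by simp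
    then have "\<psi> ?q = \<psi> \<one>\<^bsub>Z2m_Z4 m\<^esub>"
      using p fk q hom_one[OF hom group_Z2m_Z4 is_group] by (simp add: \<psi>'_def \<psi>_carrier)
    then have "?q = \<one>\<^bsub>Z2m_Z4 m\<^esub>"
      using inj q Z.one_closed by (blast dest: inj_onD)
    then have restr: "restrict f {..<m} = (\<lambda>i\<in>{..<m}. 0)" and "k = 0"
      by (simp_all add: one_Z2m_Z4)
    have "f i = (\<lambda>i\<in>{..<Suc m}. 0) i" for i
    proof (cases "i < m")
      case True
      then show ?thesis using fun_cong[OF restr, of i] by simp
    next
      case False
      then show ?thesis
        using \<open>f m = 0\<close> extensional_arb[OF f_ext, of i] by (cases "i = m") simp_all
    qed
    then have "f = (\<lambda>i\<in>{..<Suc m}. 0)" ..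
    then show ?thesis
      using fk \<open>k = 0\<close> by (simp add: one_Z2m_Z4)
  qed
  then show "inj_on \<psi>' (carrier (Z2m_Z4 (Suc m)))"
    unfolding inj_on_one_iff'[OF hom' group_Z2m_Z4 is_group] by blast
  show "\<psi> ` carrier (Z2m_Z4 m) \<subseteq> \<psi>' ` carrier (Z2m_Z4 (Suc m))"
  proof
    fix y assume "y \<in> \<psi> ` carrier (Z2m_Z4 m)"
    then obtain g k where gk: "(g, k) \<in> carrier (Z2m_Z4 m)" "y = \<psi> (g, k)" by auto
    have g_ext: "g \<in> extensional {..<m}"
      using gk by (simp add: carrier_Z2m_Z4 PiE_iff)
    then have restr: "restrict (g(m := 0)) {..<m} = g"
      by (intro ext) (simp add: extensional_arb[OF g_ext])
    have "(g(m := 0), k) \<in> carrier (Z2m_Z4 (Suc m))"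
      unfolding carrier_Z2m_Z4_Suc using restr gk g_ext by (auto simp: extensional_def)
    moreover have "\<psi>' (g(m := 0), k) = y"
      using restr gk e by (simp add: \<psi>'_def \<psi>_carrier)
    ultimately show "y \<in> \<psi>' ` carrier (Z2m_Z4 (Suc m))" by force
  qed
qed

lemma (in comm_group) maximal_embedding_Z2m_Z4_surj:
  assumes fin: "finite (carrier G)" and half: "2 * card (Omega1 G) = order G"
    and a: "a \<in> carrier G" "a \<notin> Omega1 G"
    and \<psi>: "\<psi> \<in> hom (Z2m_Z4 m) G" "inj_on \<psi> (carrier (Z2m_Z4 m))" "a \<in> \<psi> ` carrier (Z2m_Z4 m)"
    and maximal: "\<nexists>\<psi>'. \<psi>' \<in> hom (Z2m_Z4 (Suc m)) G \<and> inj_on \<psi>' (carrier (Z2m_Z4 (Suc m))) \<and>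
                        a \<in> \<psi>' ` carrier (Z2m_Z4 (Suc m))"
  shows "\<psi> ` carrier (Z2m_Z4 m) = carrier G"
proof (rule ccontr)
  let ?B = "\<psi> ` carrier (Z2m_Z4 m)"
  assume "?B \<noteq> carrier G"
  then obtain g where g: "g \<in> carrier G" "g \<notin> ?B"
    using hom_in_carrier[OF \<psi>(1)] by blast
  have B: "subgroup ?B G"
    using \<psi>(1) by (intro group_hom.img_is_subgroup)
      (simp add: group_hom_def group_hom_axioms_def group_Z2m_Z4)
  obtain e where e: "e \<in> Omega1 G" "e \<notin> ?B"
  proof (cases "g \<in> Omega1 G")
    case True
    then show ?thesis using that g by blast
  next
    case False
    then obtain u where u: "u \<in> Omega1 G" "g = a \<otimes> u"
      using index_two_subgroup_cover[OF fin subgroup_Omega1 half a] g by blast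
    have "u \<notin> ?B"
      using g u \<psi>(3) subgroup.m_closed[OF B] by blast
    then show ?thesis using that u by blast
  qed
  then have "e \<in> carrier G" "e \<otimes> e = \<one>"
    by (simp_all add: Omega1_def)
  from embedding_Z2m_Z4_Suc[OF \<psi>(1,2) this e(2)] \<psi>(3) maximal show False
    by blast
qed

theorem (in comm_group) iso_Z2m_Z4_iff_Omega1_index_two:
  assumes fin: "finite (carrier G)"
  shows "(\<exists>m. G \<cong> Z2m_Z4 m) \<longleftrightarrow> 2 * card (Omega1 G) = order G"
proof
  assume "\<exists>m. G \<cong> Z2m_Z4 m"
  then obtain m h where h: "h \<in> iso G (Z2m_Z4 m)"
    by (auto simp: is_iso_def)
  then show "2 * card (Omega1 G) = order G"
    using Omega1_iso_card[OF h is_group group_Z2m_Z4] double_card_Omega1_Z2m_Z4[of m]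
      iso_same_card[OF is_isoI[OF h]] by (simp add: order_def)
next
  assume half: "2 * card (Omega1 G) = order G"
  have "card (Omega1 G) \<noteq> 0"
    using fin subgroup.finite_imp_card_positive[OF subgroup_Omega1] by simp
  then have "Omega1 G \<noteq> carrier G"
    using half by (auto simp: order_def)
  then obtain a where a: "a \<in> carrier G" "a \<notin> Omega1 G"
    using subgroup.subset[OF subgroup_Omega1] by blast
  have "a \<otimes> a \<in> Omega1 G"
    by (rule index_two_square_mem[OF fin subgroup_Omega1 half a])
  then have a4: "a [^] (4::nat) = \<one>" and a2: "a \<otimes> a \<noteq> \<one>"
    using a by (auto simp: Omega1_def numeral_eq_Suc m_assoc)
  define embeds where "embeds m \<longleftrightarrow>
    (\<exists>\<psi>. \<psi> \<in> hom (Z2m_Z4 m) G \<and> inj_on \<psi> (carrier (Z2m_Z4 m)) \<and> a \<in> \<psi> ` carrier (Z2m_Z4 m))" for m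
  have bound: "2 ^ m * 4 \<le> order G" if emb: "embeds m" for m
  proof -
    obtain \<psi> where \<psi>: "\<psi> \<in> hom (Z2m_Z4 m) G" "inj_on \<psi> (carrier (Z2m_Z4 m))"
      using emb by (auto simp: embeds_def)
    then have "\<psi> ` carrier (Z2m_Z4 m) \<subseteq> carrier G"
      using hom_in_carrier[OF \<psi>(1)] by blast
    then show ?thesis
      using card_inj_on_le[OF \<psi>(2) _ fin] by (simp add: card_Z2m_Z4 order_def)
  qed
  have "\<exists>m. embeds m \<and> \<not> embeds (Suc m)"
  proof (rule ccontr)
    assume "\<nexists>m. embeds m \<and> \<not> embeds (Suc m)"
    moreover have "embeds 0"
      using embedding_Z2m_Z4_0[OF a(1) a4 a2] by (auto simp: embeds_def)
    ultimately have "embeds n" for n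
      by (induction n) auto
    then show False
      using bound[of "order G"] less_exp[of "order G"] by simp
  qed
  then obtain m \<psi> where \<psi>: "\<psi> \<in> hom (Z2m_Z4 m) G" "inj_on \<psi> (carrier (Z2m_Z4 m))"
    "a \<in> \<psi> ` carrier (Z2m_Z4 m)" and maximal: "\<not> embeds (Suc m)"
    by (auto simp: embeds_def)
  have "\<psi> ` carrier (Z2m_Z4 m) = carrier G"
    using maximal_embedding_Z2m_Z4_surj[OF fin half a \<psi>] maximal by (auto simp: embeds_def)
  then have "Z2m_Z4 m \<cong> G"
    using \<psi> by (auto simp: is_iso_def iso_def bij_betw_def)
  then show "\<exists>m. G \<cong> Z2m_Z4 m"
    using group.iso_sym[OF group_Z2m_Z4] by blast
qed

lemma mult_le_mult_eqD:
  fixes a b c d :: nat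
  assumes "a \<le> b" "c \<le> d" "b * d \<le> a * c" "0 < a" "0 < c"
  shows "a = b \<and> c = d"
proof -
  have "a * c \<le> b * c" "b * c \<le> b * d"
    using assms(1,2) by simp_all
  then have ac: "a * c = b * c" and bd: "b * c = b * d"
    using assms(3) by linarith+
  have "c = d"
    using bd assms(1,4) by simp
  moreover have "a = b"
    using ac assms(5) by simp
  ultimately show ?thesis by simp
qed

lemma CD_lattice_eqI:
  assumes "finite (carrier G)"
    and bound: "\<And>H. subgroup H G \<Longrightarrow> cd_measure G H \<le> M"
    and H0: "subgroup H0 G" "cd_measure G H0 = M"
  shows "CD_lattice G = {H. subgroup H G \<and> cd_measure G H = M}"
proof -
  have "finite {H. subgroup H G}"
    by (rule finite_subset[of _ "Pow (carrier G)"]) (use assms(1) in \<open>auto dest: subgroup.subset\<close>)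
  then have "finite {cd_measure G H | H. subgroup H G}"
    by (simp add: setcompr_eq_image)
  then have "cd_max G = M"
    unfolding cd_max_def using bound H0 by (intro Max_eqI) auto
  then show ?thesis
    by (simp add: CD_lattice_def)
qed

section \<open>Generalized dicyclic groups\<close>

locale dicyclic = group G for G (structure) +
  fixes A and x
  assumes finite_carrier: "finite (carrier G)"
    and subgroup_A: "subgroup A G"
    and A_comm: "\<And>a b. a \<in> A \<Longrightarrow> b \<in> A \<Longrightarrow> a \<otimes> b = b \<otimes> a"
    and x_carrier: "x \<in> carrier G" and x_notin_A: "x \<notin> A"
    and carrier_eq: "carrier G = A \<union> {x \<otimes> a | a. a \<in> A}"
    and x_pow_4: "x [^] (4::nat) = \<one>"
    and x_pow_2_in_A: "x [^] (2::nat) \<in> A"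
    and x_pow_2_ne_one: "x [^] (2::nat) \<noteq> \<one>"
    and x_conj: "\<And>a. a \<in> A \<Longrightarrow> inv x \<otimes> a \<otimes> x = inv a"

sublocale dicyclic \<subseteq> A: comm_group "G\<lparr>carrier := A\<rparr>"
proof (rule group.group_comm_groupI)
  show "group (G\<lparr>carrier := A\<rparr>)"
    by (rule subgroup_imp_group[OF subgroup_A])
qed (simp add: A_comm)

context dicyclic
begin

lemma A_carrier [simp]: "a \<in> A \<Longrightarrow> a \<in> carrier G"
  using subgroup.subset[OF subgroup_A] by blast

lemma mult_A [simp]: "a \<in> A \<Longrightarrow> b \<in> A \<Longrightarrow> a \<otimes> b \<in> A"
  by (rule subgroup.m_closed[OF subgroup_A])

lemma inv_A [simp]: "a \<in> A \<Longrightarrow> inv a \<in> A"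
  by (rule subgroup.m_inv_closed[OF subgroup_A])

lemma finite_A: "finite A"
  using finite_subset[OF _ finite_carrier] subgroup.subset[OF subgroup_A] by blast

lemma mult_A_notin_A: "g \<notin> A \<Longrightarrow> g \<in> carrier G \<Longrightarrow> a \<in> A \<Longrightarrow> g \<otimes> a \<notin> A"
  by (metis A_carrier inv_A mult_A m_assoc r_inv r_one)

lemma card_carrier: "card (carrier G) = 2 * card A"
proof -
  have "carrier G = A \<union> (\<lambda>a. x \<otimes> a) ` A"
    using carrier_eq by auto
  then show ?thesis
    using subgroup_translate_disjoint[OF subgroup_A x_carrier x_notin_A] finite_A
    by (simp add: card_Un_disjoint)
qed

definition s where "s = x \<otimes> x"

lemma s_A: "s \<in> A"
  using x_pow_2_in_A x_carrier by (simp add: s_def numeral_2_eq_2)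

lemma s_ne_one: "s \<noteq> \<one>"
  using x_pow_2_ne_one x_carrier by (simp add: s_def numeral_2_eq_2)

lemma s_mult_s: "s \<otimes> s = \<one>"
  using x_pow_4 x_carrier by (simp add: s_def numeral_eq_Suc m_assoc)

lemma outside_A_eq: "g \<in> carrier G \<Longrightarrow> g \<notin> A \<Longrightarrow> \<exists>b\<in>A. g = x \<otimes> b"
  using carrier_eq by auto

lemma A_mult_outside_A:
  assumes a: "a \<in> A" and g: "g \<in> carrier G" "g \<notin> A"
  shows "a \<otimes> g = g \<otimes> inv a"
proof -
  obtain b where b: "b \<in> A" "g = x \<otimes> b"
    using outside_A_eq[OF g] by blast
  have "a \<otimes> x = x \<otimes> (inv x \<otimes> a \<otimes> x)"
    using a x_carrier by (simp flip: m_assoc)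
  then have "a \<otimes> x = x \<otimes> inv a"
    using x_conj[OF a] by simp
  then have "a \<otimes> g = x \<otimes> (inv a \<otimes> b)"
    using a b x_carrier by (simp flip: m_assoc)
  also have "\<dots> = g \<otimes> inv a"
    using a b x_carrier A_comm[of "inv a" b] by (simp add: m_assoc)
  finally show ?thesis .
qed

lemma outside_A_square:
  assumes g: "g \<in> carrier G" "g \<notin> A"
  shows "g \<otimes> g = s"
proof -
  obtain b where b: "b \<in> A" "g = x \<otimes> b"
    using outside_A_eq[OF g] by blast
  have "g \<otimes> g = x \<otimes> (b \<otimes> g)"
    using b x_carrier g by (simp add: m_assoc)
  also have "\<dots> = x \<otimes> (x \<otimes> (b \<otimes> inv b))"
    using A_mult_outside_A[OF b(1) g] b x_carrier by (simp add: m_assoc)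
  finally show ?thesis
    using b x_carrier by (simp add: s_def m_assoc)
qed

lemma inv_mult_outside_A:
  assumes "g \<in> carrier G" "g \<notin> A" "h \<in> carrier G" "h \<notin> A"
  shows "inv g \<otimes> h \<in> A"
proof -
  obtain b c where "b \<in> A" "g = x \<otimes> b" "c \<in> A" "h = x \<otimes> c"
    using outside_A_eq assms by metis
  moreover have "inv x \<otimes> (x \<otimes> c) = c" if "c \<in> A" for c
    using that x_carrier by (simp flip: m_assoc)
  ultimately show ?thesis
    using x_carrier by (simp add: inv_mult_group m_assoc)
qed

definition \<Omega> where "\<Omega> = {a \<in> A. a \<otimes> a = \<one>}"

lemma Omega1_A: "Omega1 (G\<lparr>carrier := A\<rparr>) = \<Omega>"
  by (simp add: Omega1_def \<Omega>_def)

lemma subgroup_Omega_A: "subgroup \<Omega> (G\<lparr>carrier := A\<rparr>)"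
  using A.subgroup_Omega1 by (simp add: Omega1_A)

lemma subgroup_Omega: "subgroup \<Omega> G"
  by (rule incl_subgroup[OF subgroup_A subgroup_Omega_A])

lemma Omega_A: "\<Omega> \<subseteq> A"
  by (auto simp: \<Omega>_def)

lemma Omega_carrier: "u \<in> \<Omega> \<Longrightarrow> u \<in> carrier G"
  using Omega_A by auto

lemma Omega_mult_Omega: "u \<in> \<Omega> \<Longrightarrow> v \<in> \<Omega> \<Longrightarrow> u \<otimes> v \<in> \<Omega>"
  by (rule subgroup.m_closed[OF subgroup_Omega])

lemma s_Omega: "s \<in> \<Omega>"
  using s_A s_mult_s by (simp add: \<Omega>_def)

lemma exponent_two_iff: "exponent_two G A \<longleftrightarrow> \<Omega> = A"
  using s_A s_ne_one by (auto simp: exponent_two_def \<Omega>_def numeral_2_eq_2)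

lemma iso_Z2m_Z4_iff: "(\<exists>m. G\<lparr>carrier := A\<rparr> \<cong> Z2m_Z4 m) \<longleftrightarrow> 2 * card \<Omega> = card A"
  using A.iso_Z2m_Z4_iff_Omega1_index_two finite_A by (simp add: Omega1_A order_def)

lemma A_commute_outside_A_iff:
  assumes "a \<in> A" "g \<in> carrier G" "g \<notin> A"
  shows "a \<otimes> g = g \<otimes> a \<longleftrightarrow> a \<in> \<Omega>"
proof -
  have "a \<otimes> g = g \<otimes> a \<longleftrightarrow> inv a = a"
    using A_mult_outside_A[OF assms] assms by simp
  also have "\<dots> \<longleftrightarrow> a \<in> \<Omega>"
    using assms(1) by (auto simp: \<Omega>_def intro: inv_equality) (metis A_carrier r_inv)
  finally show ?thesis .
qed

lemma Omega_central: "u \<in> \<Omega> \<Longrightarrow> g \<in> carrier G \<Longrightarrow> u \<otimes> g = g \<otimes> u"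
  using A_comm A_commute_outside_A_iff Omega_A by blast

lemma double_card_Omega_le: "a \<in> A \<Longrightarrow> a \<notin> \<Omega> \<Longrightarrow> 2 * card \<Omega> \<le> card A"
  using A.double_card_subgroup_le[OF _ subgroup_Omega_A] finite_A by (simp add: order_def)

lemma finite_centralizer: "finite (centralizer G H)"
  by (rule finite_subset[OF _ finite_carrier]) (auto simp: centralizer_def)

lemma centralizer_eq_carrier: "H \<subseteq> \<Omega> \<Longrightarrow> centralizer G H = carrier G"
  using Omega_central by (fastforce simp: centralizer_def)

lemma centralizer_eq_A:
  assumes "H \<subseteq> A" "h \<in> H" "h \<notin> \<Omega>"
  shows "centralizer G H = A"
proof
  show "A \<subseteq> centralizer G H"
    using assms(1) A_comm by (auto simp: centralizer_def)
  show "centralizer G H \<subseteq> A"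
    using assms A_commute_outside_A_iff by (fastforce simp: centralizer_def)
qed

lemma centralizer_outside_A_subset:
  assumes "g \<in> H" "g \<in> carrier G" "g \<notin> A"
  shows "centralizer G H \<subseteq> \<Omega> \<union> (\<lambda>u. g \<otimes> u) ` \<Omega>"
proof
  fix c assume c: "c \<in> centralizer G H"
  then have c_carrier: "c \<in> carrier G" and cg: "c \<otimes> g = g \<otimes> c"
    using assms(1) by (auto simp: centralizer_def)
  show "c \<in> \<Omega> \<union> (\<lambda>u. g \<otimes> u) ` \<Omega>"
  proof (cases "c \<in> A")
    case True
    then show ?thesis using cg A_commute_outside_A_iff assms(2,3) by blast
  next
    case False
    obtain u where u: "u \<in> A" and c_eq: "c = g \<otimes> u"
      using inv_mult_outside_A[OF assms(2,3) c_carrier False] assms(2) c_carrier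
      by (metis inv_solve_left' inv_closed m_closed)
    have "g \<otimes> (u \<otimes> g) = g \<otimes> (g \<otimes> u)"
      using cg c_eq assms(2) u by (simp add: m_assoc)
    then have "u \<in> \<Omega>"
      using A_commute_outside_A_iff[OF u assms(2,3)] assms(2) u by simp
    then show ?thesis using c_eq by blast
  qed
qed

lemma centralizer_subset_Omega:
  assumes "g \<in> H" "g \<in> carrier G" "g \<notin> A" and "k \<in> H" "k \<in> A" "k \<notin> \<Omega>"
  shows "centralizer G H \<subseteq> \<Omega>"
proof
  fix c assume "c \<in> centralizer G H"
  then have c: "c \<in> carrier G" "c \<otimes> g = g \<otimes> c" "c \<otimes> k = k \<otimes> c"
    using assms by (auto simp: centralizer_def)
  show "c \<in> \<Omega>"
  proof (cases "c \<in> A")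
    case True
    then show ?thesis using c(2) A_commute_outside_A_iff assms(2,3) by blast
  next
    case False
    then show ?thesis using c(1,3) A_commute_outside_A_iff[OF assms(5) c(1) False] assms(6) by simp
  qed
qed

lemma card_centralizer_outside_A_le:
  assumes "g \<in> H" "g \<in> carrier G" "g \<notin> A"
  shows "card (centralizer G H) \<le> 2 * card \<Omega>"
proof -
  have fin: "finite \<Omega>"
    using finite_subset[OF Omega_A finite_A] .
  have "card (centralizer G H) \<le> card (\<Omega> \<union> (\<lambda>u. g \<otimes> u) ` \<Omega>)"
    using centralizer_outside_A_subset[OF assms] fin by (intro card_mono) auto
  also have "\<dots> \<le> card \<Omega> + card ((\<lambda>u. g \<otimes> u) ` \<Omega>)"
    by (rule card_Un_le)
  also have "\<dots> \<le> 2 * card \<Omega>"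
    using card_image_le[OF fin, of "\<lambda>u. g \<otimes> u"] by simp
  finally show ?thesis .
qed

lemma card_subgroup_outside_A_le:
  assumes H: "subgroup H G" and g: "g \<in> H" "g \<notin> A"
  shows "card H \<le> 2 * card (H \<inter> A)"
proof -
  have g_carrier: "g \<in> carrier G"
    using subgroup.subset[OF H] g by blast
  have fin: "finite (H \<inter> A)"
    using finite_A by simp
  have "H \<subseteq> (H \<inter> A) \<union> (\<lambda>u. g \<otimes> u) ` (H \<inter> A)"
  proof
    fix h assume h: "h \<in> H"
    have h_carrier: "h \<in> carrier G"
      using subgroup.subset[OF H] h by blast
    show "h \<in> (H \<inter> A) \<union> (\<lambda>u. g \<otimes> u) ` (H \<inter> A)"
    proof (cases "h \<in> A")
      case False
      have "inv g \<otimes> h \<in> H \<inter> A"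
        using inv_mult_outside_A[OF g_carrier g(2) h_carrier False] H g h
        by (simp add: subgroup.m_closed subgroup.m_inv_closed)
      moreover have "h = g \<otimes> (inv g \<otimes> h)"
        using g_carrier h_carrier by (simp flip: m_assoc)
      ultimately show ?thesis by blast
    qed (use h in blast)
  qed
  then have "card H \<le> card ((H \<inter> A) \<union> (\<lambda>u. g \<otimes> u) ` (H \<inter> A))"
    using fin by (intro card_mono) auto
  also have "\<dots> \<le> card (H \<inter> A) + card ((\<lambda>u. g \<otimes> u) ` (H \<inter> A))"
    by (rule card_Un_le)
  also have "\<dots> \<le> 2 * card (H \<inter> A)"
    using card_image_le[OF fin, of "\<lambda>u. g \<otimes> u"] by simp
  finally show ?thesis .
qed

lemma card_subgroup_pos: "subgroup H G \<Longrightarrow> 0 < card H"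
  by (rule subgroup.finite_imp_card_positive[OF _ finite_carrier])

lemma card_centralizer_pos: "H \<subseteq> carrier G \<Longrightarrow> 0 < card (centralizer G H)"
proof -
  assume "H \<subseteq> carrier G"
  then have "\<one> \<in> centralizer G H"
    by (auto simp: centralizer_def)
  then show ?thesis
    using finite_centralizer card_gt_0_iff by blast
qed

lemma Omega_eq_A_imp_comm:
  assumes "\<Omega> = A" "g \<in> carrier G" "h \<in> carrier G"
  shows "g \<otimes> h = h \<otimes> g"
proof (cases "g \<in> A \<or> h \<in> A")
  case True
  then show ?thesis using Omega_central assms by metis
next
  case False
  then have u: "inv g \<otimes> h \<in> \<Omega>"
    using inv_mult_outside_A assms by auto
  have "h = g \<otimes> (inv g \<otimes> h)"
    using assms by (simp flip: m_assoc)
  also have "g \<otimes> (g \<otimes> (inv g \<otimes> h)) = (g \<otimes> (inv g \<otimes> h)) \<otimes> g"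
    using Omega_central[OF u assms(2)] u Omega_A assms by (auto simp: m_assoc)
  finally show ?thesis
    using assms by simp
qed

lemma CD_lattice_Omega_eq_A:
  assumes "\<Omega> = A"
  shows "CD_lattice G = {carrier G}"
proof -
  let ?N = "card (carrier G)"
  have "centralizer G H = carrier G" if "H \<subseteq> carrier G" for H
    using that Omega_eq_A_imp_comm[OF assms] by (auto simp: centralizer_def)
  then have m: "cd_measure G H = card H * ?N" if "H \<subseteq> carrier G" for H
    using that by (simp add: cd_measure_def)
  have "cd_measure G H \<le> ?N * ?N" if "subgroup H G" for H
    using m subgroup.subset[OF that] card_mono[OF finite_carrier] by simp
  then have "CD_lattice G = {H. subgroup H G \<and> cd_measure G H = ?N * ?N}"
    using m subgroup_self by (intro CD_lattice_eqI[OF finite_carrier]) auto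
  also have "\<dots> = {carrier G}"
  proof -
    have "subgroup H G \<and> cd_measure G H = ?N * ?N \<longleftrightarrow> H = carrier G" for H
    proof
      assume H: "subgroup H G \<and> cd_measure G H = ?N * ?N"
      then have "card H * ?N = ?N * ?N"
        using m[OF subgroup.subset[OF conjunct1[OF H]]] by simp
      then have "card H = ?N"
        using card_subgroup_pos[OF subgroup_self] by simp
      then show "H = carrier G"
        using H card_subset_eq[OF finite_carrier subgroup.subset] by blast
    qed (simp add: m subgroup_self)
    then show ?thesis by blast
  qed
  finally show ?thesis .
qed

lemma cd_measure_bound_subset_A:
  assumes half_le: "2 * card \<Omega> \<le> card A" and H: "subgroup H G" "H \<subseteq> A"
  shows "cd_measure G H \<le> card A * card A \<and>
    (cd_measure G H = card A * card A \<longrightarrow> H = A \<or> H = \<Omega> \<and> 2 * card \<Omega> = card A)"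
proof (cases "H \<subseteq> \<Omega>")
  case True
  have m: "cd_measure G H = 2 * card H * card A"
    using centralizer_eq_carrier[OF True] card_carrier by (simp add: cd_measure_def)
  have le: "card H \<le> card \<Omega>"
    using card_mono[OF finite_subset[OF Omega_A finite_A] True] .
  have "cd_measure G H = card A * card A \<longrightarrow> H = \<Omega> \<and> 2 * card \<Omega> = card A"
  proof
    assume "cd_measure G H = card A * card A"
    then have "2 * card H = card A"
      using m card_subgroup_pos[OF subgroup_A] by simp
    then show "H = \<Omega> \<and> 2 * card \<Omega> = card A"
      using le half_le card_subset_eq[OF finite_subset[OF Omega_A finite_A] True] by simp
  qed
  moreover have "cd_measure G H \<le> card A * card A"
    using m le half_le by (simp add: mult_le_mono1)
  ultimately show ?thesis by blast
next
  case False
  then obtain h where "h \<in> H" "h \<notin> \<Omega>" by blast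
  then have m: "cd_measure G H = card H * card A"
    using centralizer_eq_A[OF H(2)] by (simp add: cd_measure_def)
  have "card H \<le> card A"
    by (rule card_mono[OF finite_A H(2)])
  moreover have "H = A" if "card H = card A"
    using card_subset_eq[OF finite_A H(2)] that by simp
  ultimately show ?thesis
    using m card_subgroup_pos[OF subgroup_A] by simp
qed

lemma cd_measure_bound_not_subset_A:
  assumes half_le: "2 * card \<Omega> \<le> card A" and H: "subgroup H G" and g: "g \<in> H" "g \<notin> A"
  shows "cd_measure G H \<le> card A * card A \<and>
    (cd_measure G H = card A * card A \<longrightarrow> \<Omega> \<subseteq> H \<and> 2 * card \<Omega> = card A)"
proof -
  have g_carrier: "g \<in> carrier G"
    using subgroup.subset[OF H] g by blast
  have fin\<Omega>: "finite \<Omega>"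
    using finite_subset[OF Omega_A finite_A] .
  have pos: "0 < card H" "0 < card (centralizer G H)"
    using card_subgroup_pos[OF H] card_centralizer_pos[OF subgroup.subset[OF H]] by simp_all
  have m: "cd_measure G H = card H * card (centralizer G H)"
    by (simp add: cd_measure_def)
  show ?thesis
  proof (cases "H \<inter> A \<subseteq> \<Omega>")
    case True
    have HA_le: "card (H \<inter> A) \<le> card \<Omega>"
      by (rule card_mono[OF fin\<Omega> True])
    have H_le: "card H \<le> card A" and C_le: "card (centralizer G H) \<le> card A"
      using card_subgroup_outside_A_le[OF H g] card_centralizer_outside_A_le[OF g(1) g_carrier g(2)]
        HA_le half_le by simp_all
    have "cd_measure G H = card A * card A \<longrightarrow> \<Omega> \<subseteq> H \<and> 2 * card \<Omega> = card A"
    proof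
      assume "cd_measure G H = card A * card A"
      then have "card H = card A" "card (centralizer G H) = card A"
        using mult_le_mult_eqD[OF H_le C_le _ pos] m by simp_all
      then have "2 * card \<Omega> = card A" "card (H \<inter> A) = card \<Omega>"
        using card_subgroup_outside_A_le[OF H g] card_centralizer_outside_A_le[OF g(1) g_carrier g(2)]
          HA_le half_le by simp_all
      then show "\<Omega> \<subseteq> H \<and> 2 * card \<Omega> = card A"
        using card_subset_eq[OF fin\<Omega> True] by auto
    qed
    moreover have "cd_measure G H \<le> card A * card A"
      using m H_le C_le by (simp add: mult_le_mono)
    ultimately show ?thesis by blast
  next
    case False
    then obtain k where k: "k \<in> H" "k \<in> A" "k \<notin> \<Omega>" by blast
    have C_le: "card (centralizer G H) \<le> card \<Omega>"
      using card_mono[OF fin\<Omega> centralizer_subset_Omega[OF g(1) g_carrier g(2) k]] .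
    have H_le: "card H \<le> 2 * card A"
      using card_mono[OF finite_carrier subgroup.subset[OF H]] card_carrier by simp
    have bound: "2 * card A * card \<Omega> \<le> card A * card A"
      using half_le by simp
    have "cd_measure G H = card A * card A \<longrightarrow> \<Omega> \<subseteq> H \<and> 2 * card \<Omega> = card A"
    proof
      assume eq: "cd_measure G H = card A * card A"
      then have "card H = 2 * card A" and C_eq: "card (centralizer G H) = card \<Omega>"
        using mult_le_mult_eqD[OF H_le C_le _ pos] m bound by simp_all
      then have "H = carrier G"
        using card_subset_eq[OF finite_carrier subgroup.subset[OF H]] card_carrier by simp
      moreover have "2 * card \<Omega> = card A"
        using eq m C_eq \<open>card H = 2 * card A\<close> card_subgroup_pos[OF subgroup_A] by simp
      ultimately show "\<Omega> \<subseteq> H \<and> 2 * card \<Omega> = card A"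
        using subgroup.subset[OF subgroup_Omega] by simp
    qed
    moreover have "cd_measure G H \<le> card A * card A"
      using le_trans[OF mult_le_mono[OF H_le C_le] bound] m by simp
    ultimately show ?thesis by blast
  qed
qed

lemma cd_measure_bound:
  assumes "\<Omega> \<noteq> A" "subgroup H G"
  shows "cd_measure G H \<le> card A * card A \<and>
    (cd_measure G H = card A * card A \<longrightarrow> \<Omega> \<subseteq> H \<and> (H = A \<or> 2 * card \<Omega> = card A))"
proof -
  obtain a where "a \<in> A" "a \<notin> \<Omega>"
    using assms(1) Omega_A by blast
  then have half_le: "2 * card \<Omega> \<le> card A"
    by (rule double_card_Omega_le)
  show ?thesis
  proof (cases "H \<subseteq> A")
    case True
    then show ?thesis
      using cd_measure_bound_subset_A[OF half_le assms(2)] Omega_A by auto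
  next
    case False
    then show ?thesis
      using cd_measure_bound_not_subset_A[OF half_le assms(2)] by blast
  qed
qed

lemma cd_measure_A:
  assumes "\<Omega> \<noteq> A"
  shows "cd_measure G A = card A * card A"
proof -
  obtain a where "a \<in> A" "a \<notin> \<Omega>"
    using assms Omega_A by blast
  then show ?thesis
    using centralizer_eq_A[OF subset_refl] by (simp add: cd_measure_def)
qed

lemma CD_lattice_eq_A:
  assumes "\<Omega> \<noteq> A" "2 * card \<Omega> \<noteq> card A"
  shows "CD_lattice G = {A}"
proof -
  have "CD_lattice G = {H. subgroup H G \<and> cd_measure G H = card A * card A}"
    using cd_measure_bound[OF assms(1)] subgroup_A cd_measure_A[OF assms(1)]
    by (intro CD_lattice_eqI[OF finite_carrier]) auto
  also have "\<dots> = {A}"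
    using cd_measure_bound[OF assms(1)] assms(2) subgroup_A cd_measure_A[OF assms(1)] by auto
  finally show ?thesis .
qed

lemma group_center_eq_Omega:
  assumes "\<Omega> \<noteq> A"
  shows "group_center G = \<Omega>"
proof
  obtain a where "a \<in> A" "a \<notin> \<Omega>"
    using assms Omega_A by blast
  then show "group_center G \<subseteq> \<Omega>"
    unfolding group_center_def using x_carrier x_notin_A
    by (intro centralizer_subset_Omega[of x]) auto
  show "\<Omega> \<subseteq> group_center G"
    using Omega_central Omega_A by (auto simp: group_center_def centralizer_def)
qed

definition Omega_join where "Omega_join g = \<Omega> \<union> (\<lambda>u. g \<otimes> u) ` \<Omega>"

lemma Omega_mult_swap:
  assumes "u \<in> \<Omega>" "g \<in> carrier G" "h \<in> carrier G" "v \<in> carrier G"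
  shows "(g \<otimes> u) \<otimes> (h \<otimes> v) = (g \<otimes> h) \<otimes> (u \<otimes> v)"
proof -
  have "(g \<otimes> u) \<otimes> (h \<otimes> v) = g \<otimes> ((u \<otimes> h) \<otimes> v)"
    using assms Omega_carrier by (simp add: m_assoc)
  also have "u \<otimes> h = h \<otimes> u"
    using assms(1,3) by (rule Omega_central)
  finally show ?thesis
    using assms Omega_carrier by (simp add: m_assoc)
qed

lemma inv_outside_A:
  assumes "h \<in> carrier G" "h \<notin> A"
  shows "inv h = h \<otimes> s"
proof (rule inv_equality)
  have "(h \<otimes> s) \<otimes> h = h \<otimes> (h \<otimes> s)"
    using Omega_central[OF s_Omega assms(1)] assms s_A by (simp add: m_assoc)
  also have "\<dots> = s \<otimes> s"
    using outside_A_square[OF assms] assms s_A by (simp flip: m_assoc)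
  finally show "(h \<otimes> s) \<otimes> h = \<one>"
    using s_mult_s by simp
qed (use assms s_A in simp_all)

lemma Omega_join_mem: "g \<in> carrier G \<Longrightarrow> g \<in> Omega_join g"
  using subgroup.one_closed[OF subgroup_Omega] by (force simp: Omega_join_def)

lemma subgroup_Omega_join:
  assumes g: "g \<in> carrier G" "g \<notin> A"
  shows "subgroup (Omega_join g) G"
proof (rule subgroupI)
  have gu: "g \<otimes> u \<in> carrier G" "g \<otimes> u \<notin> A" if "u \<in> \<Omega>" for u
    using g that mult_A_notin_A Omega_A Omega_carrier by auto
  show "Omega_join g \<subseteq> carrier G" "Omega_join g \<noteq> {}"
    using g Omega_carrier Omega_join_mem by (auto simp: Omega_join_def)
  show "inv h \<in> Omega_join g" if h: "h \<in> Omega_join g" for h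
  proof (cases "h \<in> \<Omega>")
    case True
    then show ?thesis
      by (simp add: Omega_join_def subgroup.m_inv_closed[OF subgroup_Omega])
  next
    case False
    then obtain u where u: "u \<in> \<Omega>" "h = g \<otimes> u"
      using h by (auto simp: Omega_join_def)
    have "inv h = h \<otimes> s"
      using inv_outside_A gu[OF u(1)] u(2) by simp
    also have "\<dots> = g \<otimes> (u \<otimes> s)"
      using u g s_A Omega_carrier by (simp add: m_assoc)
    finally show ?thesis
      using u s_Omega Omega_mult_Omega by (auto simp: Omega_join_def)
  qed
  show "h \<otimes> k \<in> Omega_join g" if hk: "h \<in> Omega_join g" "k \<in> Omega_join g" for h k
  proof -
    consider "h \<in> \<Omega>" "k \<in> \<Omega>"
      | u where "h \<in> \<Omega>" "u \<in> \<Omega>" "k = g \<otimes> u"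
      | u where "u \<in> \<Omega>" "h = g \<otimes> u" "k \<in> \<Omega>"
      | u v where "u \<in> \<Omega>" "h = g \<otimes> u" "v \<in> \<Omega>" "k = g \<otimes> v"
      using hk by (auto simp: Omega_join_def)
    then show ?thesis
    proof cases
      case 1
      then show ?thesis by (simp add: Omega_join_def Omega_mult_Omega)
    next
      case (2 u)
      then have "h \<otimes> k = g \<otimes> (h \<otimes> u)"
        using Omega_mult_swap[of h \<one> g u] g Omega_carrier by simp
      then show ?thesis
        using 2 Omega_mult_Omega by (auto simp: Omega_join_def)
    next
      case (3 u)
      then have "h \<otimes> k = g \<otimes> (u \<otimes> k)"
        using g Omega_carrier by (simp add: m_assoc)
      then show ?thesis
        using 3 Omega_mult_Omega by (auto simp: Omega_join_def)
    next
      case (4 u v)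
      then have "h \<otimes> k = (g \<otimes> g) \<otimes> (u \<otimes> v)"
        using Omega_mult_swap g Omega_carrier by simp
      then have "h \<otimes> k = s \<otimes> (u \<otimes> v)"
        using outside_A_square[OF g] by simp
      then show ?thesis
        using 4 s_Omega Omega_mult_Omega by (simp add: Omega_join_def)
    qed
  qed
qed

lemma card_Omega_join:
  assumes g: "g \<in> carrier G" "g \<notin> A"
  shows "card (Omega_join g) = 2 * card \<Omega>"
proof -
  have "\<Omega> \<inter> (\<lambda>u. g \<otimes> u) ` \<Omega> = {}"
    using g mult_A_notin_A Omega_A by auto
  moreover have "card ((\<lambda>u. g \<otimes> u) ` \<Omega>) = card \<Omega>"
    using g Omega_carrier by (intro card_image inj_onI) auto
  ultimately show ?thesis
    using finite_subset[OF Omega_A finite_A] by (simp add: Omega_join_def card_Un_disjoint)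
qed

lemma centralizer_Omega_join:
  assumes g: "g \<in> carrier G" "g \<notin> A"
  shows "centralizer G (Omega_join g) = Omega_join g"
proof
  show "centralizer G (Omega_join g) \<subseteq> Omega_join g"
    using centralizer_outside_A_subset[OF Omega_join_mem[OF g(1)] g] by (simp add: Omega_join_def)
  have "h \<otimes> k = k \<otimes> h" if hk: "h \<in> Omega_join g" "k \<in> Omega_join g" for h k
  proof -
    consider "h \<in> \<Omega>" | "k \<in> \<Omega>" | u v where "u \<in> \<Omega>" "h = g \<otimes> u" "v \<in> \<Omega>" "k = g \<otimes> v"
      using hk by (auto simp: Omega_join_def)
    then show ?thesis
    proof cases
      case 1
      then show ?thesis using Omega_central subgroup.subset[OF subgroup_Omega_join[OF g]] hk by blast
    next
      case 2
      then show ?thesis using Omega_central subgroup.subset[OF subgroup_Omega_join[OF g]] hk by (metis subsetD)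
    next
      case 3
      then show ?thesis
        using Omega_mult_swap Omega_central[of u v] g Omega_carrier by simp
    qed
  qed
  then show "Omega_join g \<subseteq> centralizer G (Omega_join g)"
    using subgroup.subset[OF subgroup_Omega_join[OF g]] by (auto simp: centralizer_def)
qed

lemma Omega_join_eq:
  assumes g: "g \<in> carrier G" and u: "u \<in> \<Omega>"
  shows "Omega_join (g \<otimes> u) = Omega_join g"
proof -
  have "(\<lambda>v. g \<otimes> u \<otimes> v) ` \<Omega> = (\<lambda>v. g \<otimes> v) ` ((\<lambda>v. u \<otimes> v) ` \<Omega>)"
    using g u Omega_carrier by (auto simp: m_assoc image_image)
  also have "(\<lambda>v. u \<otimes> v) ` \<Omega> = \<Omega>"
  proof
    show "(\<lambda>v. u \<otimes> v) ` \<Omega> \<subseteq> \<Omega>"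
      using u Omega_mult_Omega by auto
    have "v = u \<otimes> (u \<otimes> v)" if "v \<in> \<Omega>" for v
      using u that Omega_carrier by (simp add: \<Omega>_def flip: m_assoc)
    then show "\<Omega> \<subseteq> (\<lambda>v. u \<otimes> v) ` \<Omega>"
      using u Omega_mult_Omega by blast
  qed
  finally show ?thesis
    by (simp add: Omega_join_def)
qed

end

section \<open>The case of an index two subgroup \<Omega>\<close>

locale dicyclic_index_two = dicyclic +
  fixes a0
  assumes a0_A: "a0 \<in> A" and a0_notin_Omega: "a0 \<notin> \<Omega>"
    and double_card_Omega: "2 * card \<Omega> = card A"
begin

lemma Omega_ne_A: "\<Omega> \<noteq> A"
  using a0_A a0_notin_Omega by blast

lemma A_cover: "h \<in> A \<Longrightarrow> h \<notin> \<Omega> \<Longrightarrow> A = \<Omega> \<union> (\<lambda>u. h \<otimes> u) ` \<Omega>"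
  using A.index_two_subgroup_cover[OF _ subgroup_Omega_A] finite_A double_card_Omega
  by (simp add: order_def)

lemma subgroup_between_Omega_A:
  assumes "\<Omega> \<subseteq> K" "K \<subseteq> A" and closed: "\<And>h u. h \<in> K \<Longrightarrow> u \<in> \<Omega> \<Longrightarrow> h \<otimes> u \<in> K"
  shows "K = \<Omega> \<or> K = A"
proof (cases "K \<subseteq> \<Omega>")
  case False
  then obtain h where "h \<in> K" "h \<notin> \<Omega>" by blast
  then have "A \<subseteq> K"
    using A_cover[of h] assms by blast
  then show ?thesis using assms(2) by blast
qed (use assms(1) in blast)

lemma Omega_join_cases:
  assumes g: "g \<in> carrier G" "g \<notin> A"
  shows "Omega_join g = Omega_join x \<or> Omega_join g = Omega_join (x \<otimes> a0)"
proof -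
  have "inv x \<otimes> g \<in> A"
    using inv_mult_outside_A[OF x_carrier x_notin_A g] .
  then consider "inv x \<otimes> g \<in> \<Omega>" | u where "u \<in> \<Omega>" "inv x \<otimes> g = a0 \<otimes> u"
    using A_cover[OF a0_A a0_notin_Omega] by blast
  then show ?thesis
  proof cases
    case 1
    then show ?thesis
      using Omega_join_eq[OF x_carrier 1] x_carrier g by (simp flip: m_assoc)
  next
    case (2 u)
    have "g = x \<otimes> (inv x \<otimes> g)"
      using x_carrier g by (simp flip: m_assoc)
    also have "\<dots> = (x \<otimes> a0) \<otimes> u"
      using 2 x_carrier a0_A Omega_carrier by (simp add: m_assoc)
    finally show ?thesis
      using Omega_join_eq[OF _ 2(1), of "x \<otimes> a0"] x_carrier a0_A by simp
  qed
qed

lemma Omega_join_x_ne: "Omega_join x \<noteq> Omega_join (x \<otimes> a0)"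
proof
  assume "Omega_join x = Omega_join (x \<otimes> a0)"
  then have "x \<otimes> a0 \<in> Omega_join x"
    using Omega_join_mem x_carrier a0_A by simp
  then obtain u where "u \<in> \<Omega>" "x \<otimes> a0 = x \<otimes> u"
    using mult_A_notin_A[OF x_notin_A x_carrier a0_A] Omega_A by (auto simp: Omega_join_def)
  then show False
    using a0_A a0_notin_Omega x_carrier Omega_carrier by simp
qed

lemma subgroups_above_Omega:
  assumes H: "subgroup H G" "\<Omega> \<subseteq> H"
  shows "H \<in> {\<Omega>, A, carrier G, Omega_join x, Omega_join (x \<otimes> a0)}"
proof (cases "H \<subseteq> A")
  case True
  then show ?thesis
    using subgroup_between_Omega_A[OF H(2) True] subgroup.m_closed[OF H(1)] H(2) by blast
next
  case False
  then obtain g where g: "g \<in> H" "g \<notin> A" by blast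
  have g_carrier: "g \<in> carrier G"
    using subgroup.subset[OF H(1)] g by blast
  have mem: "g \<otimes> u \<in> H" if "u \<in> H \<inter> A" for u
    using that g subgroup.m_closed[OF H(1)] by blast
  have decomp: "\<exists>u \<in> H \<inter> A. h = g \<otimes> u" if "h \<in> H" "h \<notin> A" for h
  proof -
    have "inv g \<otimes> h \<in> H \<inter> A"
      using that inv_mult_outside_A[OF g_carrier g(2)] subgroup.subset[OF H(1)] g H(1)
      by (auto simp: subgroup.m_closed subgroup.m_inv_closed)
    moreover have "h = g \<otimes> (inv g \<otimes> h)"
      using g_carrier that subgroup.subset[OF H(1)] by (auto simp flip: m_assoc)
    ultimately show ?thesis by blast
  qed
  have "H \<inter> A = \<Omega> \<or> H \<inter> A = A"
    using H Omega_A subgroup.m_closed[OF H(1)] Omega_A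
    by (intro subgroup_between_Omega_A) auto
  then show ?thesis
  proof
    assume HA: "H \<inter> A = \<Omega>"
    have "H = Omega_join g"
      using decomp mem HA H(2) by (auto simp: Omega_join_def)
    then show ?thesis
      using Omega_join_cases[OF g_carrier g(2)] by blast
  next
    assume HA: "H \<inter> A = A"
    have "carrier G \<subseteq> H"
    proof
      fix h assume h: "h \<in> carrier G"
      show "h \<in> H"
      proof (cases "h \<in> A")
        case False
        then have "inv g \<otimes> h \<in> A"
          using inv_mult_outside_A[OF g_carrier g(2) h] by simp
        then have "g \<otimes> (inv g \<otimes> h) \<in> H"
          using mem HA by blast
        then show ?thesis
          using g_carrier h by (simp flip: m_assoc)
      qed (use HA in blast)
    qed
    then show ?thesis
      using subgroup.subset[OF H(1)] by blast
  qed
qed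

lemma cd_measure_above_Omega:
  assumes "subgroup H G" "\<Omega> \<subseteq> H"
  shows "cd_measure G H = card A * card A"
proof -
  have x_a0: "x \<otimes> a0 \<in> carrier G" "x \<otimes> a0 \<notin> A"
    using x_carrier a0_A mult_A_notin_A[OF x_notin_A] by auto
  have "cd_measure G (Omega_join g) = card A * card A" if "g \<in> carrier G" "g \<notin> A" for g
    using card_Omega_join[OF that] centralizer_Omega_join[OF that] double_card_Omega
    by (simp add: cd_measure_def)
  moreover have "cd_measure G \<Omega> = card A * card A"
    using centralizer_eq_carrier card_carrier double_card_Omega by (simp add: cd_measure_def)
  moreover have "cd_measure G (carrier G) = card A * card A"
    using group_center_eq_Omega[OF Omega_ne_A] card_carrier double_card_Omega
    by (simp add: cd_measure_def group_center_def)
  ultimately show ?thesis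
    using subgroups_above_Omega[OF assms] cd_measure_A[OF Omega_ne_A] x_carrier x_notin_A x_a0
    by auto
qed

lemma CD_lattice_eq_above_Omega: "CD_lattice G = {H. subgroup H G \<and> \<Omega> \<subseteq> H}"
proof -
  have "CD_lattice G = {H. subgroup H G \<and> cd_measure G H = card A * card A}"
    using cd_measure_bound[OF Omega_ne_A] subgroup_A cd_measure_A[OF Omega_ne_A]
    by (intro CD_lattice_eqI[OF finite_carrier]) auto
  also have "\<dots> = {H. subgroup H G \<and> \<Omega> \<subseteq> H}"
    using cd_measure_bound[OF Omega_ne_A] cd_measure_above_Omega by blast
  finally show ?thesis .
qed

lemma Omega_join_properties:
  assumes "g \<in> carrier G" "g \<notin> A"
  shows "subgroup (Omega_join g) G" "\<Omega> \<subseteq> Omega_join g" "card (Omega_join g) = card A"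
    "Omega_join g \<noteq> A" "Omega_join g \<noteq> \<Omega>" "Omega_join g \<noteq> carrier G"
proof -
  show "subgroup (Omega_join g) G" "card (Omega_join g) = card A"
    using subgroup_Omega_join[OF assms] card_Omega_join[OF assms] double_card_Omega by simp_all
  then show "Omega_join g \<noteq> carrier G"
    using card_carrier card_subgroup_pos[OF subgroup_A] by auto
  show "\<Omega> \<subseteq> Omega_join g"
    by (simp add: Omega_join_def)
  show "Omega_join g \<noteq> A" "Omega_join g \<noteq> \<Omega>"
    using Omega_join_mem[OF assms(1)] assms(2) Omega_A by auto
qed

lemma quasi_antichain_CD_lattice: "quasi_antichain (CD_lattice G) 3"
  unfolding quasi_antichain_def
proof (intro exI conjI)
  let ?J1 = "Omega_join x" and ?J2 = "Omega_join (x \<otimes> a0)"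
  let ?S = "{A, ?J1, ?J2}"
  have "x \<otimes> a0 \<in> carrier G" "x \<otimes> a0 \<notin> A"
    using x_carrier a0_A mult_A_notin_A[OF x_notin_A] by auto
  note J1 = Omega_join_properties[OF x_carrier x_notin_A]
    and J2 = Omega_join_properties[OF this]
  show "CD_lattice G = {\<Omega>, carrier G} \<union> ?S"
    using CD_lattice_eq_above_Omega subgroups_above_Omega subgroup_Omega subgroup_self
      subgroup_A Omega_A subgroup.subset[OF subgroup_Omega] J1 J2 by auto
  show "\<Omega> \<noteq> carrier G" "\<Omega> \<notin> ?S" "carrier G \<notin> ?S"
    using Omega_ne_A x_carrier x_notin_A Omega_A J1 J2 by auto
  show "card ?S = 3"
    using Omega_join_x_ne J1 J2 by auto
  show "\<forall>H\<in>CD_lattice G. \<Omega> \<subseteq> H \<and> H \<subseteq> carrier G"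
    using CD_lattice_eq_above_Omega subgroup.subset[of _ G] by auto
  have "finite K \<and> card K = card A" if "K \<in> ?S" for K
    using that finite_A J1 J2 finite_subset[OF subgroup.subset finite_carrier] by auto
  then show "\<forall>H\<in>?S. \<forall>K\<in>?S. H \<subseteq> K \<longrightarrow> H = K"
    using card_subset_eq by metis
qed simp

end

theorem theorem3p1:
  fixes G :: "('a, 'b) monoid_scheme" and A :: "'a set" and n :: nat
  assumes "gen_dicyclic G A"
    and "card A = 2 * n"
  shows "(\<not> (\<exists>m. G\<lparr>carrier := A\<rparr> \<cong> Z2m_Z4 m) \<longrightarrow>
           (exponent_two G A \<longrightarrow> CD_lattice G = {carrier G}) \<and>
           (\<not> exponent_two G A \<longrightarrow> CD_lattice G = {A}))
       \<and> ((\<exists>m. G\<lparr>carrier := A\<rparr> \<cong> Z2m_Z4 m) \<longrightarrow>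
           quasi_antichain (CD_lattice G) 3 \<and>
           CD_lattice G = {H. subgroup H G \<and> group_center G \<subseteq> H})"
proof -
  obtain x where "dicyclic G A x"
    using assms(1) unfolding gen_dicyclic_def dicyclic_def dicyclic_axioms_def by blast
  then interpret dicyclic G A x .
  show ?thesis
  proof (cases "\<Omega> = A")
    case True
    then have "2 * card \<Omega> \<noteq> card A"
      using card_subgroup_pos[OF subgroup_A] by simp
    with True show ?thesis
      using iso_Z2m_Z4_iff exponent_two_iff CD_lattice_Omega_eq_A by simp
  next
    case False
    then obtain a0 where a0: "a0 \<in> A" "a0 \<notin> \<Omega>"
      using Omega_A by blast
    show ?thesis
    proof (cases "2 * card \<Omega> = card A")
      case True
      interpret dicyclic_index_two G A x a0
        using a0 True by unfold_locales
      show ?thesis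
        using iso_Z2m_Z4_iff True quasi_antichain_CD_lattice CD_lattice_eq_above_Omega
          group_center_eq_Omega[OF False] by simp
    next
      case not_index_two: False
      with False show ?thesis
        using iso_Z2m_Z4_iff exponent_two_iff CD_lattice_eq_A by simp
    qed
  qed
qed

end
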